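(* Let $\mathcal{Z}\subset[0,1]$ be finite, let $\ell:[0,1]\times\{0,1\}\to\mathbb{R}$ be a proper loss, and let $\sigma:[0,1]\to[0,1]$ be any swap function. Then for every run of the forecasting protocol (predictions $p_t\in\mathcal{Z}$ drawn from $\mathcal{P}_t$, labels $y_t\in\{0,1\}$), $$\mathsf{SReg}^{\ell}_{\sigma}=\sum_{p\in\mathcal{Z}}\Big(\sum_{t=1}^T \mathbb{1}\{p_t=p\}\Big)\big(\mathsf{BREG}_{-\ell}(\rho_p,p)-\mathsf{BREG}_{-\ell}(\rho_p,\sigma(p))\big),$$ $$\mathsf{PSReg}^{\ell}_{\sigma}=\sum_{p\in\mathcal{Z}}\Big(\sum_{t=1}^T \mathcal{P}_t(p)\Big)\big(\mathsf{BREG}_{-\ell}(\tilde\rho_p,p)-\mathsf{BREG}_{-\ell}(\tilde\rho_p,\sigma(p))\big).$$ Furthermore, $$\mathsf{SReg}^{\ell}=\sum_{p\in\mathcal{Z}}\sum_{t=1}^T \mathbb{1}\{p_t=p\}\,\mathsf{BREG}_{-\ell}(\rho_p,p),\qquad \mathsf{PSReg}^{\ell}=\sum_{p\in\mathcal{Z}}\sum_{t=1}^T \mathcal{P}_t(p)\,\mathsf{BREG}_{-\ell}(\tilde\rho_p,p).$$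
   Context: Forecasting protocol: for $t=1,\dots,T$, the forecaster chooses a distribution $\mathcal{P}_t$ over a finite set $\mathcal{Z}\subset[0,1]$ (possibly depending on the past), draws a prediction $p_t\sim\mathcal{P}_t$, and simultaneously the adversary chooses $y_t\in\{0,1\}$, which is then revealed. Define $\rho_p=\frac{\sum_t y_t\mathbb{1}\{p_t=p\}}{\sum_t\mathbb{1}\{p_t=p\}}$ and $\tilde\rho_p=\frac{\sum_t y_t\mathcal{P}_t(p)}{\sum_t\mathcal{P}_t(p)}$, with the convention $0/0=0$. A loss $\ell:[0,1]\times\{0,1\}\to\mathbb{R}$ is proper if $\mathbb{E}_{y\sim \mathrm{Ber}(p)}[\ell(p,y)]\le\mathbb{E}_{y\sim\mathrm{Ber}(p)}[\ell(p',y)]$ for all $p,p'\in[0,1]$. Its univariate form is $\ell(p):=p\,\ell(p,1)+(1-p)\,\ell(p,0)$ (a concave function), and a proper loss satisfies $\ell(p,y)=\ell(p)+g_p(y-p)$ with $g_p:=\ell(p,1)-\ell(p,0)$ a supergradient of the univariate form at $p$. The Bregman divergence of $-\ell$ is $\mathsf{BREG}_{-\ell}(x,y):=\ell(y)-\ell(x)+g_y(x-y)$. For a swap function $\sigma$, $\mathsf{SReg}^\ell_\sigma:=\sum_{t=1}^T\big(\ell(p_t,y_t)-\ell(\sigma(p_t),y_t)\big)$ and $\mathsf{PSReg}^\ell_\sigma:=\sum_{p\in\mathcal{Z}}\sum_{t=1}^T\mathcal{P}_t(p)\big(\ell(p,y_t)-\ell(\sigma(p),y_t)\big)$; swap regret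 $\mathsf{SReg}^\ell:=\sup_{\sigma:[0,1]\to[0,1]}\mathsf{SReg}^\ell_\sigma$ and pseudo swap regret $\mathsf{PSReg}^\ell:=\sup_{\sigma:[0,1]\to[0,1]}\mathsf{PSReg}^\ell_\sigma$. *)

theory Defs
  imports Complex_Main
begin

text \<open>A loss is a function \<open>L :: real \<Rightarrow> real \<Rightarrow> real\<close>; only its values on
  \<open>[0,1] \<times> {0,1}\<close> matter. Labels \<open>y\<close> are reals in \<open>{0,1}\<close>.\<close>

definition proper_loss :: "(real \<Rightarrow> real \<Rightarrow> real) \<Rightarrow> bool" where
  "proper_loss L \<longleftrightarrow> (\<forall>p\<in>{0..1}. \<forall>p'\<in>{0..1}.
      p * L p 1 + (1 - p) * L p 0 \<le> p * L p' 1 + (1 - p) * L p' 0)"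

definition univ_loss :: "(real \<Rightarrow> real \<Rightarrow> real) \<Rightarrow> real \<Rightarrow> real" where
  "univ_loss L p = p * L p 1 + (1 - p) * L p 0"

definition loss_grad :: "(real \<Rightarrow> real \<Rightarrow> real) \<Rightarrow> real \<Rightarrow> real" where
  "loss_grad L p = L p 1 - L p 0"

text \<open>Bregman divergence of \<open>-L\<close>: \<open>BREG(x,y) = L(y) - L(x) + g_y (x - y)\<close>.\<close>
definition breg :: "(real \<Rightarrow> real \<Rightarrow> real) \<Rightarrow> real \<Rightarrow> real \<Rightarrow> real" where
  "breg L x y = univ_loss L y - univ_loss L x + loss_grad L y * (x - y)"

text \<open>\<open>\<rho>_q\<close> (with 0/0 = 0, which is Isabelle's division convention).\<close>
definition rho :: "nat \<Rightarrow> (nat \<Rightarrow> real) \<Rightarrow> (nat \<Rightarrow> real) \<Rightarrow> real \<Rightarrow> real" where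
  "rho T p y q = (\<Sum>t=1..T. y t * (if p t = q then 1 else 0)) /
                 (\<Sum>t=1..T. (if p t = q then 1 else 0))"

definition rho_tilde :: "nat \<Rightarrow> (nat \<Rightarrow> real \<Rightarrow> real) \<Rightarrow> (nat \<Rightarrow> real) \<Rightarrow> real \<Rightarrow> real" where
  "rho_tilde T P y q = (\<Sum>t=1..T. y t * P t q) / (\<Sum>t=1..T. P t q)"

definition SReg_sigma :: "(real \<Rightarrow> real \<Rightarrow> real) \<Rightarrow> nat \<Rightarrow> (nat \<Rightarrow> real) \<Rightarrow> (nat \<Rightarrow> real)
    \<Rightarrow> (real \<Rightarrow> real) \<Rightarrow> real" where
  "SReg_sigma L T p y \<sigma> = (\<Sum>t=1..T. L (p t) (y t) - L (\<sigma> (p t)) (y t))"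

definition PSReg_sigma :: "(real \<Rightarrow> real \<Rightarrow> real) \<Rightarrow> real set \<Rightarrow> nat \<Rightarrow> (nat \<Rightarrow> real \<Rightarrow> real)
    \<Rightarrow> (nat \<Rightarrow> real) \<Rightarrow> (real \<Rightarrow> real) \<Rightarrow> real" where
  "PSReg_sigma L Z T P y \<sigma> = (\<Sum>q\<in>Z. \<Sum>t=1..T. P t q * (L q (y t) - L (\<sigma> q) (y t)))"

definition swap_functions :: "(real \<Rightarrow> real) set" where
  "swap_functions = {\<sigma>. \<forall>x\<in>{0..1}. \<sigma> x \<in> {0..1}}"

definition SReg :: "(real \<Rightarrow> real \<Rightarrow> real) \<Rightarrow> nat \<Rightarrow> (nat \<Rightarrow> real) \<Rightarrow> (nat \<Rightarrow> real) \<Rightarrow> real" where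
  "SReg L T p y = (SUP \<sigma>\<in>swap_functions. SReg_sigma L T p y \<sigma>)"

definition PSReg :: "(real \<Rightarrow> real \<Rightarrow> real) \<Rightarrow> real set \<Rightarrow> nat \<Rightarrow> (nat \<Rightarrow> real \<Rightarrow> real)
    \<Rightarrow> (nat \<Rightarrow> real) \<Rightarrow> real" where
  "PSReg L Z T P y = (SUP \<sigma>\<in>swap_functions. PSReg_sigma L Z T P y \<sigma>)"

end

theory Submission imports Defs begin

text \<open>On labels \<open>y \<in> {0,1}\<close> the loss of a forecast \<open>q\<close> is affine in \<open>y\<close>:
  \<open>\<ell>(q,y) = \<ell>(q) + g\<^sub>q (y - q)\<close>. Hence the total (weighted) loss of \<open>q\<close> over a set of
  rounds depends on the labels only through their weighted mean \<open>\<rho>\<close>, and equals the total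
  weight times \<open>\<ell>(\<rho>) + BREG(\<rho>, q)\<close>. Grouping the rounds by the forecast made, the
  (pseudo) swap regret of \<open>\<sigma>\<close> splits into per-forecast differences of Bregman divergences.
  Properness makes the divergence nonnegative on \<open>[0,1]\<close>, so the supremum over \<open>\<sigma>\<close> is
  attained by swapping each forecast \<open>q\<close> to \<open>\<rho>\<^sub>q\<close>.\<close>

lemma loss_eq_univ_loss_plus_grad:
  assumes "b \<in> {0, 1}"
  shows "L a b = univ_loss L a + loss_grad L a * (b - a)"
  using assms by (auto simp: univ_loss_def loss_grad_def algebra_simps)

lemma breg_self [simp]: "breg L x x = 0"
  by (simp add: breg_def)

lemma breg_nonneg:
  assumes "proper_loss L" "x \<in> {0..1}" "s \<in> {0..1}"
  shows "breg L x s \<ge> 0"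
proof -
  have "x * L x 1 + (1 - x) * L x 0 \<le> x * L s 1 + (1 - x) * L s 0"
    using assms unfolding proper_loss_def by blast
  then show ?thesis
    unfolding breg_def univ_loss_def loss_grad_def by (simp add: algebra_simps)
qed

lemma weighted_mean_in_unit_interval:
  fixes w y :: "'a \<Rightarrow> real"
  assumes "\<And>t. t \<in> A \<Longrightarrow> w t \<ge> 0" and "\<And>t. t \<in> A \<Longrightarrow> y t \<in> {0, 1}"
  shows "(\<Sum>t\<in>A. y t * w t) / (\<Sum>t\<in>A. w t) \<in> {0..1}"
proof -
  have "0 \<le> (\<Sum>t\<in>A. y t * w t)"
    by (rule sum_nonneg) (use assms in fastforce)
  moreover have "(\<Sum>t\<in>A. y t * w t) \<le> (\<Sum>t\<in>A. w t)"
    by (rule sum_mono) (use assms in fastforce)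
  ultimately show ?thesis
    by (cases "(\<Sum>t\<in>A. w t) = 0") (auto simp: divide_le_eq_1)
qed

lemma weighted_sum_loss_eq_breg:
  fixes w y :: "'a \<Rightarrow> real"
  assumes A: "finite A" and w: "\<And>t. t \<in> A \<Longrightarrow> w t \<ge> 0"
    and y: "\<And>t. t \<in> A \<Longrightarrow> y t \<in> {0, 1}"
  defines "x \<equiv> (\<Sum>t\<in>A. y t * w t) / (\<Sum>t\<in>A. w t)"
  shows "(\<Sum>t\<in>A. w t * L q (y t)) = (\<Sum>t\<in>A. w t) * (univ_loss L x + breg L x q)"
proof (cases "(\<Sum>t\<in>A. w t) = 0")
  case True
  then have "\<forall>t\<in>A. w t = 0"
    using sum_nonneg_eq_0_iff[OF A] w by blast
  then show ?thesis by simp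
next
  case False
  define W S where "W = (\<Sum>t\<in>A. w t)" and "S = (\<Sum>t\<in>A. y t * w t)"
  have "(\<Sum>t\<in>A. w t * L q (y t))
      = (\<Sum>t\<in>A. (univ_loss L q - loss_grad L q * q) * w t + loss_grad L q * (y t * w t))"
    by (rule sum.cong) (simp_all add: loss_eq_univ_loss_plus_grad[OF y, where L = L and a = q] algebra_simps)
  also have "\<dots> = (univ_loss L q - loss_grad L q * q) * W + loss_grad L q * S"
    by (simp add: sum.distrib sum_distrib_left W_def S_def)
  also have "\<dots> = W * (univ_loss L q + loss_grad L q * (x - q))"
    using False by (simp add: x_def W_def S_def algebra_simps)
  finally show ?thesis
    by (simp add: W_def breg_def)
qed

lemma weighted_sum_loss_diff_eq_breg_diff:
  fixes w y :: "'a \<Rightarrow> real"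
  assumes "finite A" and "\<And>t. t \<in> A \<Longrightarrow> w t \<ge> 0" and "\<And>t. t \<in> A \<Longrightarrow> y t \<in> {0, 1}"
  defines "x \<equiv> (\<Sum>t\<in>A. y t * w t) / (\<Sum>t\<in>A. w t)"
  shows "(\<Sum>t\<in>A. w t * (L q (y t) - L s (y t))) = (\<Sum>t\<in>A. w t) * (breg L x q - breg L x s)"
  using weighted_sum_loss_eq_breg[OF assms(1-3), where L = L and q = q]
    weighted_sum_loss_eq_breg[OF assms(1-3), where L = L and q = s]
  by (simp add: x_def sum_subtractf algebra_simps)

lemma sum_group_by_value:
  fixes f :: "'b \<Rightarrow> 'a \<Rightarrow> real"
  assumes "finite Z" and "\<And>t. t \<in> A \<Longrightarrow> p t \<in> Z"
  shows "(\<Sum>t\<in>A. f (p t) t) = (\<Sum>q\<in>Z. \<Sum>t\<in>A. (if p t = q then 1 else 0) * f q t)"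
proof -
  have "(\<Sum>q\<in>Z. (if p t = q then 1 else 0) * f q t) = f (p t) t" if "t \<in> A" for t
  proof -
    have "(\<Sum>q\<in>Z. (if p t = q then 1 else 0) * f q t) = (\<Sum>q\<in>Z. if p t = q then f q t else 0)"
      by (rule sum.cong) auto
    then show ?thesis
      using assms that by simp
  qed
  then have "(\<Sum>t\<in>A. f (p t) t) = (\<Sum>t\<in>A. \<Sum>q\<in>Z. (if p t = q then 1 else 0) * f q t)"
    by simp
  also have "\<dots> = (\<Sum>q\<in>Z. \<Sum>t\<in>A. (if p t = q then 1 else 0) * f q t)"
    by (rule sum.swap)
  finally show ?thesis .
qed

lemma SReg_sigma_eq_breg:
  assumes "finite Z" and "\<And>t. t \<in> {1..T} \<Longrightarrow> p t \<in> Z"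
    and "\<And>t. t \<in> {1..T} \<Longrightarrow> y t \<in> {0, 1}"
  shows "SReg_sigma L T p y \<sigma> =
           (\<Sum>q\<in>Z. (\<Sum>t=1..T. (if p t = q then 1 else 0)) *
               (breg L (rho T p y q) q - breg L (rho T p y q) (\<sigma> q)))"
    (is "_ = ?rhs")
proof -
  have "SReg_sigma L T p y \<sigma>
      = (\<Sum>q\<in>Z. \<Sum>t=1..T. (if p t = q then 1 else 0) * (L q (y t) - L (\<sigma> q) (y t)))"
    unfolding SReg_sigma_def
    by (rule sum_group_by_value[where f = "\<lambda>q t. L q (y t) - L (\<sigma> q) (y t)"]) (use assms in auto)
  also have "\<dots> = ?rhs"
    unfolding rho_def
    using assms(3) by (intro sum.cong refl weighted_sum_loss_diff_eq_breg_diff) auto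
  finally show ?thesis .
qed

lemma PSReg_sigma_eq_breg:
  assumes "\<And>t q. t \<in> {1..T} \<Longrightarrow> q \<in> Z \<Longrightarrow> P t q \<ge> 0"
    and "\<And>t. t \<in> {1..T} \<Longrightarrow> y t \<in> {0, 1}"
  shows "PSReg_sigma L Z T P y \<sigma> =
           (\<Sum>q\<in>Z. (\<Sum>t=1..T. P t q) *
               (breg L (rho_tilde T P y q) q - breg L (rho_tilde T P y q) (\<sigma> q)))"
  unfolding PSReg_sigma_def rho_tilde_def
  using assms by (intro sum.cong refl weighted_sum_loss_diff_eq_breg_diff) auto

lemma SUP_swap_functions_breg_gap:
  assumes "proper_loss L" and "Z \<subseteq> {0..1}"
    and W: "\<And>q. q \<in> Z \<Longrightarrow> W q \<ge> 0" and r: "\<And>q. q \<in> Z \<Longrightarrow> r q \<in> {0..1}"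
  shows "(SUP \<sigma>\<in>swap_functions. \<Sum>q\<in>Z. W q * (breg L (r q) q - breg L (r q) (\<sigma> q)))
         = (\<Sum>q\<in>Z. W q * breg L (r q) q)"
proof (rule cSup_eq_maximum)
  define \<sigma>\<^sub>0 where "\<sigma>\<^sub>0 x = (if x \<in> Z then r x else 0)" for x
  have "\<sigma>\<^sub>0 \<in> swap_functions"
    using r by (simp add: swap_functions_def \<sigma>\<^sub>0_def)
  moreover have "(\<Sum>q\<in>Z. W q * breg L (r q) q)
      = (\<Sum>q\<in>Z. W q * (breg L (r q) q - breg L (r q) (\<sigma>\<^sub>0 q)))"
    by (simp add: \<sigma>\<^sub>0_def)
  ultimately show "(\<Sum>q\<in>Z. W q * breg L (r q) q)
      \<in> (\<lambda>\<sigma>. \<Sum>q\<in>Z. W q * (breg L (r q) q - breg L (r q) (\<sigma> q))) ` swap_functions"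
    by blast
next
  fix v assume "v \<in> (\<lambda>\<sigma>. \<Sum>q\<in>Z. W q * (breg L (r q) q - breg L (r q) (\<sigma> q))) ` swap_functions"
  then obtain \<sigma> where \<sigma>: "\<sigma> \<in> swap_functions"
    and v: "v = (\<Sum>q\<in>Z. W q * (breg L (r q) q - breg L (r q) (\<sigma> q)))"
    by blast
  have "breg L (r q) (\<sigma> q) \<ge> 0" if "q \<in> Z" for q
    using breg_nonneg[OF assms(1) r] \<sigma> assms(2) that by (auto simp: swap_functions_def)
  then show "v \<le> (\<Sum>q\<in>Z. W q * breg L (r q) q)"
    unfolding v using W by (intro sum_mono) (simp add: algebra_simps)
qed

lemma SReg_eq_breg:
  assumes "proper_loss L" and "finite Z" and "Z \<subseteq> {0..1}"
    and p: "\<And>t. t \<in> {1..T} \<Longrightarrow> p t \<in> Z" and y: "\<And>t. t \<in> {1..T} \<Longrightarrow> y t \<in> {0, 1}"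
  shows "SReg L T p y = (\<Sum>q\<in>Z. \<Sum>t=1..T. (if p t = q then 1 else 0) * breg L (rho T p y q) q)"
proof -
  have rho: "rho T p y q \<in> {0..1}" for q
    unfolding rho_def by (rule weighted_mean_in_unit_interval) (use y in auto)
  have weight: "(\<Sum>t=1..T. if p t = q then 1 else 0) \<ge> (0::real)" for q
    by (rule sum_nonneg) auto
  have regret: "SReg_sigma L T p y = (\<lambda>\<sigma>. \<Sum>q\<in>Z. (\<Sum>t=1..T. if p t = q then 1 else 0) *
      (breg L (rho T p y q) q - breg L (rho T p y q) (\<sigma> q)))"
    by (rule ext) (rule SReg_sigma_eq_breg[OF assms(2) p y])
  show ?thesis
    unfolding SReg_def regret sum_distrib_right[symmetric]
    by (rule SUP_swap_functions_breg_gap[OF assms(1,3) weight rho])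
qed

lemma PSReg_eq_breg:
  assumes "proper_loss L" and "Z \<subseteq> {0..1}"
    and P: "\<And>t q. t \<in> {1..T} \<Longrightarrow> q \<in> Z \<Longrightarrow> P t q \<ge> 0"
    and y: "\<And>t. t \<in> {1..T} \<Longrightarrow> y t \<in> {0, 1}"
  shows "PSReg L Z T P y = (\<Sum>q\<in>Z. \<Sum>t=1..T. P t q * breg L (rho_tilde T P y q) q)"
proof -
  have rho: "rho_tilde T P y q \<in> {0..1}" if "q \<in> Z" for q
    unfolding rho_tilde_def by (rule weighted_mean_in_unit_interval) (use P y that in auto)
  have weight: "(\<Sum>t=1..T. P t q) \<ge> 0" if "q \<in> Z" for q
    by (rule sum_nonneg) (use P that in auto)
  have regret: "PSReg_sigma L Z T P y = (\<lambda>\<sigma>. \<Sum>q\<in>Z. (\<Sum>t=1..T. P t q) *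
      (breg L (rho_tilde T P y q) q - breg L (rho_tilde T P y q) (\<sigma> q)))"
    by (rule ext) (rule PSReg_sigma_eq_breg[OF P y])
  show ?thesis
    unfolding PSReg_def regret sum_distrib_right[symmetric]
    by (rule SUP_swap_functions_breg_gap[OF assms(1,2) weight rho])
qed

theorem proposition1:
  fixes Z :: "real set" and L :: "real \<Rightarrow> real \<Rightarrow> real" and \<sigma> :: "real \<Rightarrow> real"
    and T :: nat and p :: "nat \<Rightarrow> real" and P :: "nat \<Rightarrow> real \<Rightarrow> real" and y :: "nat \<Rightarrow> real"
  assumes Z: "finite Z" "Z \<subseteq> {0..1}"
    and proper: "proper_loss L"
    and swap: "\<sigma> \<in> swap_functions"
    and P_nonneg: "\<And>t q. t \<in> {1..T} \<Longrightarrow> q \<in> Z \<Longrightarrow> P t q \<ge> 0"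
    and P_sum: "\<And>t. t \<in> {1..T} \<Longrightarrow> (\<Sum>q\<in>Z. P t q) = 1"
    and p_in: "\<And>t. t \<in> {1..T} \<Longrightarrow> p t \<in> Z"
    and y_in: "\<And>t. t \<in> {1..T} \<Longrightarrow> y t \<in> {0, 1}"
  shows "SReg_sigma L T p y \<sigma> =
           (\<Sum>q\<in>Z. (\<Sum>t=1..T. (if p t = q then 1 else 0)) *
               (breg L (rho T p y q) q - breg L (rho T p y q) (\<sigma> q))) \<and>
         PSReg_sigma L Z T P y \<sigma> =
           (\<Sum>q\<in>Z. (\<Sum>t=1..T. P t q) *
               (breg L (rho_tilde T P y q) q - breg L (rho_tilde T P y q) (\<sigma> q))) \<and>
         SReg L T p y =
           (\<Sum>q\<in>Z. \<Sum>t=1..T. (if p t = q then 1 else 0) * breg L (rho T p y q) q) \<and>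
         PSReg L Z T P y =
           (\<Sum>q\<in>Z. \<Sum>t=1..T. P t q * breg L (rho_tilde T P y q) q)"
  by (intro conjI SReg_sigma_eq_breg[OF Z(1) p_in y_in] PSReg_sigma_eq_breg[OF P_nonneg y_in]
      SReg_eq_breg[OF proper Z p_in y_in] PSReg_eq_breg[OF proper Z(2) P_nonneg y_in])

end
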